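(* Let $(\Omega,\mathcal F)$ be a measurable space and $\mathcal P$ a σ-convex family of probability measures on $\mathcal F$. The following are equivalent: (1) $\mathcal P$ has the class (S) property and, for a $\mathcal P$-q.s. disjointly supported alternative $\mathcal R$ of $\mathcal P$ with supports $\{S_Q\}_{Q\in\mathcal R}$, every $P\in\mathcal P$ satisfies $P\big(\bigcup_{Q\in\mathcal R(P)}S_Q\big)=1$; (2) $\mathcal P$ is pre-Hahn-localizable.
   Context: A set is $\mathcal P$-polar if contained in some $N\in\mathcal F$ with $P(N)=0$ for all $P\in\mathcal P$. A measure $\mu$ on $\mathcal F$ is supported with support $S\in\mathcal F$ if $\mu(\Omega\setminus S)=0$ and, whenever $N\in\mathcal F$ with $\mu(N\cap S)=0$, $N\cap S$ is $\mathcal P$-polar. $\mathcal P$ has the class (S) property if there is a family $\mathcal R$ of supported probability measures on $\mathcal F$ (a supported alternative) with the same null sets as $\mathcal P$; it is $\mathcal P$-q.s. disjointly supported if $S_Q\cap S_R$ is $\mathcal P$-polar for $Q\neq R$ in $\mathcal R$. $\mathcal R(P)=\{Q\in\mathcal R:P(S_Q)>0\}$. $\mathcal A\lll\mathcal B$ means every $A\in\mathcal A$ is absolutely continuous w.r.t. some $B\in\mathcal B$; $\mathrm{sconv}$ denotes countable convex combinations; σ-convex means closed under countable convex combinations. $\mathcal P$ is pre-Hahn-localizable if there are a family $\mathcal Q$ of probability measures on $\mathcal F$ and sets $S_Q\in\mathcal F$ with $Q(S_R)=\delta_{QR}$ for $Q,R\in\mathcal Q$ and $\mathcal Q\lll\mathcal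 P\lll\mathrm{sconv}(\mathcal Q)$. *)

theory Defs
  imports "HOL-Probability.Probability"
begin

text \<open>Throughout, M is the measurable space (Omega, F): Omega = space M, F = sets M.
  Families of measures are sets of measures; a measure "on F" has sets equal to sets M.\<close>

definition prob_on :: "'a measure \<Rightarrow> 'a measure \<Rightarrow> bool" where
  "prob_on M Q \<longleftrightarrow> prob_space Q \<and> sets Q = sets M"

definition polar :: "'a measure \<Rightarrow> 'a measure set \<Rightarrow> 'a set \<Rightarrow> bool" where
  "polar M \<P> A \<longleftrightarrow> (\<exists>N\<in>sets M. A \<subseteq> N \<and> (\<forall>P\<in>\<P>. emeasure P N = 0))"

definition supported_with :: "'a measure \<Rightarrow> 'a measure set \<Rightarrow> 'a measure \<Rightarrow> 'a set \<Rightarrow> bool" where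
  "supported_with M \<P> \<mu> S \<longleftrightarrow>
     S \<in> sets M \<and> emeasure \<mu> (space M - S) = 0 \<and>
     (\<forall>N\<in>sets M. emeasure \<mu> (N \<inter> S) = 0 \<longrightarrow> polar M \<P> (N \<inter> S))"

definition same_null_sets :: "'a measure \<Rightarrow> 'a measure set \<Rightarrow> 'a measure set \<Rightarrow> bool" where
  "same_null_sets M \<P> \<R> \<longleftrightarrow>
     (\<forall>N\<in>sets M. (\<forall>P\<in>\<P>. emeasure P N = 0) \<longleftrightarrow> (\<forall>Q\<in>\<R>. emeasure Q N = 0))"

definition supported_alternative ::
  "'a measure \<Rightarrow> 'a measure set \<Rightarrow> 'a measure set \<Rightarrow> ('a measure \<Rightarrow> 'a set) \<Rightarrow> bool" where
  "supported_alternative M \<P> \<R> S \<longleftrightarrow>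
     (\<forall>Q\<in>\<R>. prob_on M Q \<and> supported_with M \<P> Q (S Q)) \<and> same_null_sets M \<P> \<R>"

definition class_S :: "'a measure \<Rightarrow> 'a measure set \<Rightarrow> bool" where
  "class_S M \<P> \<longleftrightarrow> (\<exists>\<R> S. supported_alternative M \<P> \<R> S)"

definition qs_disjointly_supported ::
  "'a measure \<Rightarrow> 'a measure set \<Rightarrow> 'a measure set \<Rightarrow> ('a measure \<Rightarrow> 'a set) \<Rightarrow> bool" where
  "qs_disjointly_supported M \<P> \<R> S \<longleftrightarrow>
     (\<forall>Q\<in>\<R>. \<forall>R\<in>\<R>. Q \<noteq> R \<longrightarrow> polar M \<P> (S Q \<inter> S R))"

definition R_of :: "'a measure set \<Rightarrow> ('a measure \<Rightarrow> 'a set) \<Rightarrow> 'a measure \<Rightarrow> 'a measure set" where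
  "R_of \<R> S P = {Q\<in>\<R>. emeasure P (S Q) > 0}"

text \<open>A <<< B: every A in the first family is absolutely continuous w.r.t. some B in the
  second (library: absolutely_continuous B A means null_sets B is a subset of null_sets A)\<close>
definition abs_cont_family :: "'a measure set \<Rightarrow> 'a measure set \<Rightarrow> bool" where
  "abs_cont_family \<A> \<B> \<longleftrightarrow> (\<forall>A\<in>\<A>. \<exists>B\<in>\<B>. absolutely_continuous B A)"

definition mixture :: "'a measure \<Rightarrow> (nat \<Rightarrow> 'a measure) \<Rightarrow> (nat \<Rightarrow> real) \<Rightarrow> 'a measure" where
  "mixture M Q a = measure_of (space M) (sets M) (\<lambda>A. \<Sum>n. ennreal (a n) * emeasure (Q n) A)"

definition sconv :: "'a measure \<Rightarrow> 'a measure set \<Rightarrow> 'a measure set" where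
  "sconv M \<Q> = {mixture M Q a | Q a. (\<forall>n. Q n \<in> \<Q>) \<and> (\<forall>n. a n \<ge> 0) \<and> a sums 1}"

definition sigma_convex :: "'a measure \<Rightarrow> 'a measure set \<Rightarrow> bool" where
  "sigma_convex M \<P> \<longleftrightarrow> sconv M \<P> \<subseteq> \<P>"

definition pre_Hahn_localizable :: "'a measure \<Rightarrow> 'a measure set \<Rightarrow> bool" where
  "pre_Hahn_localizable M \<P> \<longleftrightarrow>
     (\<exists>\<Q> S. (\<forall>Q\<in>\<Q>. prob_on M Q \<and> S Q \<in> sets M) \<and>
            (\<forall>Q\<in>\<Q>. \<forall>R\<in>\<Q>. emeasure Q (S R) = (if Q = R then 1 else 0)) \<and>
            abs_cont_family \<Q> \<P> \<and> abs_cont_family \<P> (sconv M \<Q>))"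

end

theory Submission
  imports Defs
begin

(* (2) \<Longrightarrow> (1): the localizing family itself, with the sets S_Q, is a q.s. disjointly
   supported alternative. Each P is dominated by a countable mixture of the Q's, so a measurable
   set charged by no Q is polar; since Q(S_R) = 0 for Q \<noteq> R, this applies to S_Q \<inter> S_R and to
   every N \<inter> S_Q with Q(N \<inter> S_Q) = 0.

   (1) \<Longrightarrow> (2): the alternative with its supports is localizing. Quasi-sure disjointness makes
   R(P) countable, and P, living on the union of the supports of R(P), is dominated by a mixture
   of R(P). Conversely every Q \<in> R is dominated by a single P: sigma-convexity yields P_0 and a
   P_0-null set N_0 of maximal Q-measure which, up to a Q-null set, is null for every P (mixing
   P_0 with P would otherwise produce a larger one). By the support property of Q the set
   N_0 \<inter> S_Q is then polar, so Q(N_0) = 0 and Q is absolutely continuous w.r.t. P_0. *)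

lemma sets_mixture [simp]: "sets (mixture M Q a) = sets M"
  unfolding mixture_def by (simp add: sets.space_closed)

lemma suminf_swap_ennreal:
  fixes f :: "nat \<Rightarrow> nat \<Rightarrow> ennreal"
  shows "(\<Sum>i. \<Sum>n. f n i) = (\<Sum>n. \<Sum>i. f n i)"
proof -
  have "(\<Sum>i. \<Sum>n. f n i) = (\<integral>\<^sup>+i. (\<Sum>n. f n i) \<partial>count_space UNIV)"
    by (simp add: nn_integral_count_space_nat)
  also have "\<dots> = (\<Sum>n. \<integral>\<^sup>+i. f n i \<partial>count_space UNIV)"
    by (rule nn_integral_suminf) auto
  also have "\<dots> = (\<Sum>n. \<Sum>i. f n i)"
    by (simp add: nn_integral_count_space_nat)
  finally show ?thesis .
qed

lemma emeasure_mixture: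
  assumes "\<And>n. sets (Q n) = sets M" and "A \<in> sets M"
  shows "emeasure (mixture M Q a) A = (\<Sum>n. ennreal (a n) * emeasure (Q n) A)"
  unfolding mixture_def
proof (rule emeasure_measure_of_sigma[OF sets.sigma_algebra_axioms _ _ assms(2)])
  show "positive (sets M) (\<lambda>A. \<Sum>n. ennreal (a n) * emeasure (Q n) A)"
    by (simp add: positive_def)
  show "countably_additive (sets M) (\<lambda>A. \<Sum>n. ennreal (a n) * emeasure (Q n) A)"
    unfolding countably_additive_def
  proof (intro allI impI)
    fix A :: "nat \<Rightarrow> _"
    assume "range A \<subseteq> sets M" "disjoint_family A"
    then show "(\<Sum>i. \<Sum>n. ennreal (a n) * emeasure (Q n) (A i))
        = (\<Sum>n. ennreal (a n) * emeasure (Q n) (\<Union>i. A i))"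
      using assms(1) by (simp add: suminf_swap_ennreal[of "\<lambda>n i. ennreal (a n) * emeasure (Q n) (A i)"]
          suminf_emeasure)
  qed
qed

lemma emeasure_mixture_eq_0_iff:
  assumes "\<And>n. sets (Q n) = sets M" and "A \<in> sets M"
  shows "emeasure (mixture M Q a) A = 0 \<longleftrightarrow> (\<forall>n. a n > 0 \<longrightarrow> emeasure (Q n) A = 0)"
proof -
  have "emeasure (mixture M Q a) A = 0 \<longleftrightarrow> (\<forall>n. ennreal (a n) * emeasure (Q n) A = 0)"
    using assms by (simp add: emeasure_mixture suminf_eq_zero_iff)
  then show ?thesis
    by (metis ennreal_eq_0_iff mult_eq_0_iff not_less)
qed

lemma null_sets_mixture:
  assumes "\<And>n. sets (Q n) = sets M" and "\<And>n. a n > 0"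
  shows "null_sets (mixture M Q a) = (\<Inter>n. null_sets (Q n))"
proof (intro set_eqI)
  fix N
  show "N \<in> null_sets (mixture M Q a) \<longleftrightarrow> N \<in> (\<Inter>n. null_sets (Q n))"
    using assms by (auto simp: null_sets_def emeasure_mixture_eq_0_iff)
qed

lemma sconv_countable_null_sets:
  assumes "countable \<C>" "\<C> \<noteq> {}" "\<C> \<subseteq> \<Q>" and "\<And>Q. Q \<in> \<Q> \<Longrightarrow> sets Q = sets M"
  obtains B where "B \<in> sconv M \<Q>" "null_sets B = (\<Inter>Q\<in>\<C>. null_sets Q)"
proof
  let ?Q = "from_nat_into \<C>" and ?a = "\<lambda>n::nat. (1/2::real) ^ Suc n"
  have range: "range ?Q = \<C>"
    using assms(1,2) by simp
  then show "mixture M ?Q ?a \<in> sconv M \<Q>"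
    unfolding sconv_def using assms(3) power_half_series by fastforce
  have "null_sets (mixture M ?Q ?a) = (\<Inter>n. null_sets (?Q n))"
    using range assms(3,4) by (intro null_sets_mixture) auto
  also have "\<dots> = (\<Inter>Q\<in>range ?Q. null_sets Q)"
    by simp
  also have "\<dots> = (\<Inter>Q\<in>\<C>. null_sets Q)"
    by (simp only: range)
  finally show "null_sets (mixture M ?Q ?a) = (\<Inter>Q\<in>\<C>. null_sets Q)" .
qed

lemma polar_emeasure_eq_0:
  assumes "polar M \<P> X" "P \<in> \<P>" "sets P = sets M"
  shows "emeasure P X = 0"
proof -
  from assms(1) obtain N where "N \<in> sets M" "X \<subseteq> N" "\<forall>P\<in>\<P>. emeasure P N = 0"
    unfolding polar_def by auto
  with assms(2,3) show ?thesis
    by (metis emeasure_mono le_zero_eq)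
qed

lemma polar_iff_same_null_sets:
  "same_null_sets M \<P> \<R> \<Longrightarrow> polar M \<P> X \<longleftrightarrow> polar M \<R> X"
  unfolding polar_def same_null_sets_def by auto

lemma (in finite_measure) countable_ae_disjoint_positive:
  assumes sets: "\<And>i. i \<in> I \<Longrightarrow> A i \<in> sets M"
    and pos: "\<And>i. i \<in> I \<Longrightarrow> measure M (A i) > 0"
    and ae_disjoint: "\<And>i j. i \<in> I \<Longrightarrow> j \<in> I \<Longrightarrow> i \<noteq> j \<Longrightarrow> A i \<inter> A j \<in> null_sets M"
  shows "countable I"
proof -
  let ?M = "measure M (space M)"
  have "finite {i\<in>I. 1 / Suc n < measure M (A i)}" (is "finite ?X") for n
  proof (rule ccontr)
    assume "infinite ?X"
    then obtain X where X: "finite X" "card X = nat \<lceil>?M * Suc n\<rceil> + 1" "X \<subseteq> ?X"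
      by (meson infinite_arbitrarily_large)
    have "real (card X) / Suc n = (\<Sum>i\<in>X. 1 / Suc n)"
      by simp
    also have "\<dots> \<le> (\<Sum>i\<in>X. measure M (A i))"
      using X(3) by (intro sum_mono) auto
    also have "\<dots> = measure M (\<Union>i\<in>X. A i)"
    proof (rule measure_UNION_AE[symmetric])
      show "pairwise (\<lambda>i j. AE x in M. x \<notin> A i \<or> x \<notin> A j) X"
        unfolding pairwise_def
      proof (intro ballI impI)
        fix i j assume "i \<in> X" "j \<in> X" "i \<noteq> j"
        then show "AE x in M. x \<notin> A i \<or> x \<notin> A j"
          using X(3) ae_disjoint by (intro AE_I'[of "A i \<inter> A j"]) auto
      qed
    qed (use X sets in \<open>auto simp: fmeasurable_def emeasure_eq_measure\<close>)
    also have "\<dots> \<le> ?M"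
      by (rule bounded_measure)
    finally have "real (card X) \<le> ?M * Suc n"
      by (simp add: divide_le_eq)
    with X(2) real_nat_ceiling_ge[of "?M * Suc n"] show False
      by linarith
  qed
  moreover have "I \<subseteq> (\<Union>n. {i\<in>I. 1 / Suc n < measure M (A i)})"
    using pos by (auto elim!: nat_approx_posE simp del: of_nat_Suc)
  ultimately show ?thesis
    by (meson countable_UN countable_finite countable_subset countableI_type)
qed

lemma countable_R_of:
  assumes "prob_on M P" "P \<in> \<P>" "qs_disjointly_supported M \<P> \<R> S"
    and "\<And>Q. Q \<in> \<R> \<Longrightarrow> S Q \<in> sets M"
  shows "countable (R_of \<R> S P)"
proof -
  interpret prob_space P
    using assms(1) by (simp add: prob_on_def)
  have sets_P: "sets P = sets M"
    using assms(1) by (simp add: prob_on_def)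
  show ?thesis
  proof (rule countable_ae_disjoint_positive)
    fix Q assume "Q \<in> R_of \<R> S P"
    then show "S Q \<in> sets P" "measure P (S Q) > 0"
      using assms(4) sets_P by (auto simp: R_of_def emeasure_eq_measure)
  next
    fix Q R assume "Q \<in> R_of \<R> S P" "R \<in> R_of \<R> S P" "Q \<noteq> R"
    then have "polar M \<P> (S Q \<inter> S R)"
      using assms(3) by (auto simp: R_of_def qs_disjointly_supported_def)
    then show "S Q \<inter> S R \<in> null_sets P"
      using assms(2,4) sets_P \<open>Q \<in> R_of \<R> S P\<close> \<open>R \<in> R_of \<R> S P\<close>
      by (auto simp: R_of_def intro!: null_setsI polar_emeasure_eq_0)
  qed
qed

lemma SUP_null_sets_emeasure_attained:
  assumes "sets P = sets Q"
  obtains N where "N \<in> null_sets P" "emeasure Q N = (SUP N'\<in>null_sets P. emeasure Q N')"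
proof -
  have "null_sets P \<noteq> {}"
    by auto
  then obtain f :: "nat \<Rightarrow> ennreal" where f: "range f \<subseteq> emeasure Q ` null_sets P"
      "(SUP N'\<in>null_sets P. emeasure Q N') = (SUP n. f n)"
    using ennreal_SUP_countable_SUP[of "null_sets P" "emeasure Q"] by blast
  then have "\<forall>n. \<exists>N\<in>null_sets P. f n = emeasure Q N"
    by auto
  then obtain Ns where Ns: "\<And>n. Ns n \<in> null_sets P" "\<And>n. f n = emeasure Q (Ns n)"
    by metis
  let ?N = "\<Union>n. Ns n"
  have N: "?N \<in> null_sets P"
    using Ns(1) by (rule null_sets_UN)
  then have "?N \<in> sets Q"
    using assms by (simp add: null_sets_def)
  then have "(SUP N'\<in>null_sets P. emeasure Q N') \<le> emeasure Q ?N"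
    unfolding f(2) Ns(2) by (intro SUP_least emeasure_mono) auto
  moreover have "emeasure Q ?N \<le> (SUP N'\<in>null_sets P. emeasure Q N')"
    using N by (rule SUP_upper)
  ultimately show thesis
    using N that by (metis antisym)
qed

lemma sigma_convex_minimax_null_set:
  assumes sets: "\<And>P. P \<in> \<P> \<Longrightarrow> sets P = sets M" and "sigma_convex M \<P>" "\<P> \<noteq> {}"
    and "sets Q = sets M"
  obtains P\<^sub>0 N\<^sub>0 where "P\<^sub>0 \<in> \<P>" "N\<^sub>0 \<in> null_sets P\<^sub>0"
    "\<And>N. N \<in> null_sets P\<^sub>0 \<Longrightarrow> emeasure Q N \<le> emeasure Q N\<^sub>0"
    "\<And>P. P \<in> \<P> \<Longrightarrow> \<exists>N\<in>null_sets P. emeasure Q N\<^sub>0 \<le> emeasure Q N"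
proof -
  \<comment> \<open>A mixture of a minimizing sequence minimizes \<open>s\<close>: its null sets are null for the whole sequence.\<close>
  define s where "s P = (SUP N\<in>null_sets P. emeasure Q N)" for P
  have s_attained: "\<exists>N\<in>null_sets P. emeasure Q N = s P" if "P \<in> \<P>" for P
    using SUP_null_sets_emeasure_attained[of P Q] sets[OF that] assms(4) unfolding s_def by metis
  obtain f :: "nat \<Rightarrow> ennreal" where f: "range f \<subseteq> s ` \<P>" "Inf (s ` \<P>) = (INF n. f n)"
    using ennreal_Inf_countable_INF[of "s ` \<P>"] assms(3) by blast
  then have "\<forall>n. \<exists>P\<in>\<P>. f n = s P"
    by auto
  then obtain Ps where Ps: "\<And>n. Ps n \<in> \<P>" "\<And>n. f n = s (Ps n)"
    by metis
  obtain P\<^sub>0 where P\<^sub>0: "P\<^sub>0 \<in> sconv M \<P>" "null_sets P\<^sub>0 = (\<Inter>n. null_sets (Ps n))"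
    using sconv_countable_null_sets[of "range Ps" \<P> M] Ps(1) sets by auto
  have "P\<^sub>0 \<in> \<P>"
    using P\<^sub>0(1) assms(2) unfolding sigma_convex_def by blast
  have minimal: "s P\<^sub>0 \<le> s P" if "P \<in> \<P>" for P
  proof -
    have "s P\<^sub>0 \<le> f n" for n
      unfolding Ps(2) s_def using P\<^sub>0(2) by (intro SUP_subset_mono) auto
    then have "s P\<^sub>0 \<le> Inf (s ` \<P>)"
      unfolding f(2) by (rule INF_greatest)
    also have "\<dots> \<le> s P"
      using that by (rule INF_lower)
    finally show ?thesis .
  qed
  obtain N\<^sub>0 where N\<^sub>0: "N\<^sub>0 \<in> null_sets P\<^sub>0" "emeasure Q N\<^sub>0 = s P\<^sub>0"
    using s_attained[OF \<open>P\<^sub>0 \<in> \<P>\<close>] by blast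
  show thesis
  proof (rule that[OF \<open>P\<^sub>0 \<in> \<P>\<close> N\<^sub>0(1)])
    show "emeasure Q N \<le> emeasure Q N\<^sub>0" if "N \<in> null_sets P\<^sub>0" for N
      unfolding N\<^sub>0(2) s_def using that by (rule SUP_upper)
    show "\<exists>N\<in>null_sets P. emeasure Q N\<^sub>0 \<le> emeasure Q N" if "P \<in> \<P>" for P
      using s_attained[OF that] minimal[OF that] N\<^sub>0(2) by metis
  qed
qed

lemma (in finite_measure) emeasure_Diff_eq_0_of_Un_le:
  assumes "A \<in> sets M" "B \<in> sets M" "emeasure M (A \<union> B) \<le> emeasure M B"
  shows "emeasure M (A - B) = 0"
proof -
  have "emeasure M B + emeasure M (A - B) \<le> emeasure M B + 0"
    using assms by (subst plus_emeasure) (auto simp: Un_commute)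
  then show ?thesis
    using ennreal_add_left_cancel_le emeasure_finite by simp
qed

lemma sigma_convex_maximal_null_set:
  assumes sets: "\<And>P. P \<in> \<P> \<Longrightarrow> sets P = sets M" and convex: "sigma_convex M \<P>"
    and "\<P> \<noteq> {}" "finite_measure Q" "sets Q = sets M"
  obtains P\<^sub>0 N\<^sub>0 where "P\<^sub>0 \<in> \<P>" "N\<^sub>0 \<in> null_sets P\<^sub>0"
    "\<And>N. N \<in> null_sets P\<^sub>0 \<Longrightarrow> emeasure Q N \<le> emeasure Q N\<^sub>0"
    "\<And>P. P \<in> \<P> \<Longrightarrow> \<exists>N\<in>null_sets P. emeasure Q (N\<^sub>0 - N) = 0"
proof -
  obtain P\<^sub>0 N\<^sub>0 where P\<^sub>0: "P\<^sub>0 \<in> \<P>" "N\<^sub>0 \<in> null_sets P\<^sub>0"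
      and maximal: "\<And>N. N \<in> null_sets P\<^sub>0 \<Longrightarrow> emeasure Q N \<le> emeasure Q N\<^sub>0"
      and minimal: "\<And>P. P \<in> \<P> \<Longrightarrow> \<exists>N\<in>null_sets P. emeasure Q N\<^sub>0 \<le> emeasure Q N"
    using sigma_convex_minimax_null_set[OF assms(1-3,5)] by metis
  show thesis
  proof (rule that[OF P\<^sub>0 maximal])
    fix P assume "P \<in> \<P>"
    then obtain P\<^sub>2 where "P\<^sub>2 \<in> sconv M \<P>" and null_P\<^sub>2: "null_sets P\<^sub>2 = null_sets P\<^sub>0 \<inter> null_sets P"
      using sconv_countable_null_sets[of "{P\<^sub>0, P}" \<P> M] P\<^sub>0(1) sets by auto
    then have "P\<^sub>2 \<in> \<P>"
      using convex unfolding sigma_convex_def by blast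
    then obtain N where N: "N \<in> null_sets P\<^sub>0" "N \<in> null_sets P" "emeasure Q N\<^sub>0 \<le> emeasure Q N"
      using minimal null_P\<^sub>2 by blast
    \<comment> \<open>\<open>N\<^sub>0 \<union> N\<close> is still \<open>P\<^sub>0\<close>-null, so maximality of \<open>N\<^sub>0\<close> leaves no room for \<open>N\<^sub>0 - N\<close>.\<close>
    have "emeasure Q (N\<^sub>0 \<union> N) \<le> emeasure Q N"
      using P\<^sub>0(2) N(1,3) maximal[OF null_sets.Un] order_trans by blast
    then have "emeasure Q (N\<^sub>0 - N) = 0"
      using P\<^sub>0 N(1) sets assms(4,5)
      by (intro finite_measure.emeasure_Diff_eq_0_of_Un_le) (auto simp: null_sets_def)
    with N(2) show "\<exists>N\<in>null_sets P. emeasure Q (N\<^sub>0 - N) = 0"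
      by blast
  qed
qed

lemma supported_with_emeasure_Int_eq_0:
  assumes "supported_with M \<P> Q S" "sets Q = sets M" "A \<in> sets M"
    and "P \<in> \<P>" "sets P = sets M" "N \<in> null_sets P" "emeasure Q (A - N) = 0"
  shows "emeasure P (A \<inter> S) = 0"
proof -
  have S: "S \<in> sets M" and N: "N \<in> sets M"
    using assms(1,5,6) by (auto simp: supported_with_def null_sets_def)
  have "emeasure Q ((A - N) \<inter> S) = 0"
    using assms(2,3,7) S N by (auto intro: emeasure_eq_0)
  then have "polar M \<P> ((A - N) \<inter> S)"
    using assms(1,3) N by (auto simp: supported_with_def)
  then have "(A - N) \<inter> S \<in> null_sets P"
    using assms(3-5) S N by (auto intro!: polar_emeasure_eq_0)
  then have "((A - N) \<inter> S) \<union> N \<in> null_sets P"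
    using assms(6) by (rule null_sets.Un)
  then have "A \<inter> S \<in> null_sets P"
    by (rule null_sets_subset) (use assms(3,5) S in auto)
  then show ?thesis
    by auto
qed

lemma sigma_convex_dominates_supported:
  assumes sets: "\<And>P. P \<in> \<P> \<Longrightarrow> sets P = sets M" and convex: "sigma_convex M \<P>"
    and Q: "prob_on M Q" and support: "supported_with M \<P> Q S"
    and null: "\<And>N. N \<in> sets M \<Longrightarrow> \<forall>P\<in>\<P>. emeasure P N = 0 \<Longrightarrow> emeasure Q N = 0"
  shows "\<exists>P\<in>\<P>. absolutely_continuous P Q"
proof -
  interpret Q: prob_space Q
    using Q by (simp add: prob_on_def)
  have sets_Q: "sets Q = sets M"
    using Q by (simp add: prob_on_def)
  have S: "S \<in> sets M" "space M - S \<in> null_sets Q"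
    using support sets_Q by (auto simp: supported_with_def)
  have "\<P> \<noteq> {}"
  proof
    assume "\<P> = {}"
    then have "emeasure Q (space M) = 0"
      using null by simp
    then show False
      using Q.emeasure_space_1 sets_eq_imp_space_eq[OF sets_Q] by simp
  qed
  then obtain P\<^sub>0 N\<^sub>0 where P\<^sub>0: "P\<^sub>0 \<in> \<P>" "N\<^sub>0 \<in> null_sets P\<^sub>0"
      and maximal: "\<And>N. N \<in> null_sets P\<^sub>0 \<Longrightarrow> emeasure Q N \<le> emeasure Q N\<^sub>0"
      and almost_null: "\<And>P. P \<in> \<P> \<Longrightarrow> \<exists>N\<in>null_sets P. emeasure Q (N\<^sub>0 - N) = 0"
    using sigma_convex_maximal_null_set[OF sets convex _ Q.finite_measure_axioms sets_Q] by metis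
  have N\<^sub>0: "N\<^sub>0 \<in> sets M"
    using P\<^sub>0 sets by (auto simp: null_sets_def)
  have "emeasure P (N\<^sub>0 \<inter> S) = 0" if "P \<in> \<P>" for P
    using almost_null[OF that] supported_with_emeasure_Int_eq_0[OF support sets_Q N\<^sub>0 that sets[OF that]]
    by blast
  then have "emeasure Q (N\<^sub>0 \<inter> S) = 0"
    using null N\<^sub>0 S(1) by blast
  moreover have "N\<^sub>0 \<inter> S = N\<^sub>0 - (space M - S)"
    using sets.sets_into_space[OF N\<^sub>0] by blast
  ultimately have "emeasure Q N\<^sub>0 = 0"
    using emeasure_Diff_null_set[OF S(2), of N\<^sub>0] N\<^sub>0 sets_Q by simp
  then have "absolutely_continuous P\<^sub>0 Q"
    using maximal sets[OF P\<^sub>0(1)] sets_Q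
    by (auto simp: absolutely_continuous_def null_sets_def intro: antisym order_trans)
  then show ?thesis
    using P\<^sub>0(1) by blast
qed

locale pre_Hahn_localization =
  fixes M :: "'a measure" and \<P> \<Q> :: "'a measure set" and S :: "'a measure \<Rightarrow> 'a set"
  assumes prob_on_P: "P \<in> \<P> \<Longrightarrow> prob_on M P"
    and prob_on_Q: "Q \<in> \<Q> \<Longrightarrow> prob_on M Q"
    and sets_S: "Q \<in> \<Q> \<Longrightarrow> S Q \<in> sets M"
    and emeasure_S: "Q \<in> \<Q> \<Longrightarrow> R \<in> \<Q> \<Longrightarrow> emeasure Q (S R) = (if Q = R then 1 else 0)"
    and Q_abs_cont: "abs_cont_family \<Q> \<P>"
    and P_abs_cont: "abs_cont_family \<P> (sconv M \<Q>)"
begin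

lemma sets_P: "P \<in> \<P> \<Longrightarrow> sets P = sets M"
  using prob_on_P by (simp add: prob_on_def)

lemma sets_Q: "Q \<in> \<Q> \<Longrightarrow> sets Q = sets M"
  using prob_on_Q by (simp add: prob_on_def)

lemma P_dominated_by_sequence:
  assumes "P \<in> \<P>"
  obtains Qs :: "nat \<Rightarrow> 'a measure" where "\<And>n. Qs n \<in> \<Q>"
    "\<And>N. N \<in> sets M \<Longrightarrow> (\<And>n. emeasure (Qs n) N = 0) \<Longrightarrow> emeasure P N = 0"
proof -
  obtain B where "B \<in> sconv M \<Q>" "absolutely_continuous B P"
    using P_abs_cont assms unfolding abs_cont_family_def by blast
  then obtain Qs a where Qs: "\<And>n. Qs n \<in> \<Q>"
    and "absolutely_continuous (mixture M Qs a) P"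
    unfolding sconv_def by blast
  then have "emeasure P N = 0" if "N \<in> sets M" "\<And>n. emeasure (Qs n) N = 0" for N
    using that sets_Q[OF Qs] emeasure_mixture_eq_0_iff[of Qs M N a]
    by (auto simp: absolutely_continuous_def null_sets_def)
  with Qs that show thesis
    by blast
qed

lemma P_null_if_Q_null:
  assumes "P \<in> \<P>" "N \<in> sets M" "\<And>Q. Q \<in> \<Q> \<Longrightarrow> emeasure Q N = 0"
  shows "emeasure P N = 0"
  using P_dominated_by_sequence[OF assms(1)] assms(2,3) by metis

lemma polar_if_Q_null:
  assumes "N \<in> sets M" "\<And>Q. Q \<in> \<Q> \<Longrightarrow> emeasure Q N = 0"
  shows "polar M \<P> N"
  using assms P_null_if_Q_null unfolding polar_def by blast

lemma emeasure_subset_S_eq_0: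
  assumes "Q \<in> \<Q>" "R \<in> \<Q>" "Q \<noteq> R" "A \<subseteq> S R"
  shows "emeasure Q A = 0"
  using emeasure_mono[OF assms(4), of Q] emeasure_S[OF assms(1,2)] sets_S[OF assms(2)] sets_Q[OF assms(1)]
    assms(3) by simp

lemma emeasure_compl_S:
  assumes "Q \<in> \<Q>"
  shows "emeasure Q (space M - S Q) = 0"
proof -
  interpret prob_space Q
    using prob_on_Q[OF assms] by (simp add: prob_on_def)
  have "emeasure Q (space Q - S Q) = emeasure Q (space Q) - emeasure Q (S Q)"
    using sets_S[OF assms] sets_Q[OF assms] by (intro emeasure_compl) auto
  then show ?thesis
    using emeasure_S[OF assms assms] sets_eq_imp_space_eq[OF sets_Q[OF assms]] emeasure_space_1
    by simp
qed

lemma supported_with_S: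
  assumes "Q \<in> \<Q>"
  shows "supported_with M \<P> Q (S Q)"
  unfolding supported_with_def
proof (intro conjI ballI impI)
  fix N assume "N \<in> sets M" "emeasure Q (N \<inter> S Q) = 0"
  then show "polar M \<P> (N \<inter> S Q)"
    using assms sets_S emeasure_subset_S_eq_0[of _ Q "N \<inter> S Q"] by (intro polar_if_Q_null) auto
qed (use assms sets_S emeasure_compl_S in auto)

lemma same_null_sets_P_Q: "same_null_sets M \<P> \<Q>"
  unfolding same_null_sets_def
proof (intro ballI, rule iffI)
  fix N assume "N \<in> sets M" "\<forall>P\<in>\<P>. emeasure P N = 0"
  then show "\<forall>Q\<in>\<Q>. emeasure Q N = 0"
    using Q_abs_cont sets_P
    by (fastforce simp: abs_cont_family_def absolutely_continuous_def null_sets_def)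
qed (use P_null_if_Q_null in blast)

lemma qs_disjointly_supported_S: "qs_disjointly_supported M \<P> \<Q> S"
  unfolding qs_disjointly_supported_def
proof (intro ballI impI)
  fix Q R assume "Q \<in> \<Q>" "R \<in> \<Q>" "Q \<noteq> R"
  show "polar M \<P> (S Q \<inter> S R)"
  proof (rule polar_if_Q_null)
    fix Q' assume "Q' \<in> \<Q>"
    then show "emeasure Q' (S Q \<inter> S R) = 0"
      using \<open>Q \<in> \<Q>\<close> \<open>R \<in> \<Q>\<close> \<open>Q \<noteq> R\<close>
      by (cases "Q' = Q") (auto intro: emeasure_subset_S_eq_0)
  qed (use sets_S \<open>Q \<in> \<Q>\<close> \<open>R \<in> \<Q>\<close> in auto)
qed

lemma emeasure_UN_S_R_of:
  assumes P: "P \<in> \<P>"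
  shows "emeasure P (\<Union>Q\<in>R_of \<Q> S P. S Q) = 1"
proof -
  interpret prob_space P
    using prob_on_P[OF P] by (simp add: prob_on_def)
  let ?U = "\<Union>Q\<in>R_of \<Q> S P. S Q"
  have "countable (R_of \<Q> S P)"
    using prob_on_P[OF P] P qs_disjointly_supported_S sets_S by (rule countable_R_of)
  then have U: "?U \<in> sets M"
    using sets_S by (intro sets.countable_UN'') (auto simp: R_of_def)
  obtain Qs :: "nat \<Rightarrow> 'a measure" where Qs: "\<And>n. Qs n \<in> \<Q>"
    and dominated: "\<And>N. N \<in> sets M \<Longrightarrow> (\<And>n. emeasure (Qs n) N = 0) \<Longrightarrow> emeasure P N = 0"
    using P_dominated_by_sequence[OF P] by blast
  let ?Z = "\<Union>n\<in>{n. emeasure P (S (Qs n)) = 0}. S (Qs n)"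
  have Z: "?Z \<in> null_sets P"
    using sets_S[OF Qs] sets_P[OF P] countable_subset[OF subset_UNIV countableI_type]
    by (intro null_sets_UN') auto
  have "emeasure (Qs n) (space M - ?U - ?Z) = 0" for n
  proof -
    \<comment> \<open>\<open>Qs n\<close> belongs to \<open>R(P)\<close> unless its support is \<open>P\<close>-null.\<close>
    have "S (Qs n) \<subseteq> ?U \<union> ?Z"
    proof (cases "emeasure P (S (Qs n)) = 0")
      case False
      then have "Qs n \<in> R_of \<Q> S P"
        using Qs by (simp add: R_of_def zero_less_iff_neq_zero)
      then show ?thesis
        by auto
    qed auto
    then have "space M - ?U - ?Z \<subseteq> space M - S (Qs n)"
      by blast
    then show ?thesis
      using emeasure_compl_S[OF Qs] sets_S[OF Qs] sets_Q[OF Qs]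
      by (metis emeasure_mono le_zero_eq sets.compl_sets)
  qed
  then have "space M - ?U - ?Z \<in> null_sets P"
    using U Z sets_P[OF P] by (intro null_setsI dominated) (auto simp: null_sets_def)
  moreover have "{x \<in> space P. x \<notin> ?U} \<subseteq> (space M - ?U - ?Z) \<union> ?Z"
    using sets_eq_imp_space_eq[OF sets_P[OF P]] by auto
  ultimately have "AE x in P. x \<in> ?U"
    using Z by (intro AE_I'[OF null_sets.Un])
  then show ?thesis
    using U sets_P[OF P] by (intro emeasure_eq_1_AE) auto
qed

lemma supported_alternative_S: "supported_alternative M \<P> \<Q> S"
  unfolding supported_alternative_def using prob_on_Q supported_with_S same_null_sets_P_Q by blast

end

locale disjointly_supported_alternative =
  fixes M :: "'a measure" and \<P> \<R> :: "'a measure set" and S :: "'a measure \<Rightarrow> 'a set"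
  assumes prob_on_P: "P \<in> \<P> \<Longrightarrow> prob_on M P"
    and alternative: "supported_alternative M \<P> \<R> S"
    and disjoint: "qs_disjointly_supported M \<P> \<R> S"
begin

lemma sets_P: "P \<in> \<P> \<Longrightarrow> sets P = sets M"
  using prob_on_P by (simp add: prob_on_def)

lemma prob_on_R: "Q \<in> \<R> \<Longrightarrow> prob_on M Q"
  using alternative by (simp add: supported_alternative_def)

lemma sets_R: "Q \<in> \<R> \<Longrightarrow> sets Q = sets M"
  using prob_on_R by (simp add: prob_on_def)

lemma supported_with_R: "Q \<in> \<R> \<Longrightarrow> supported_with M \<P> Q (S Q)"
  using alternative by (simp add: supported_alternative_def)

lemma sets_S: "Q \<in> \<R> \<Longrightarrow> S Q \<in> sets M"
  using supported_with_R by (simp add: supported_with_def)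

lemma emeasure_compl_S: "Q \<in> \<R> \<Longrightarrow> emeasure Q (space M - S Q) = 0"
  using supported_with_R by (simp add: supported_with_def)

lemma polar_emeasure_R_eq_0: "polar M \<P> X \<Longrightarrow> Q \<in> \<R> \<Longrightarrow> emeasure Q X = 0"
  using alternative polar_iff_same_null_sets[of M \<P> \<R> X] polar_emeasure_eq_0[of M \<R> X Q] sets_R
  by (simp add: supported_alternative_def)

lemma emeasure_S:
  assumes "Q \<in> \<R>" "R \<in> \<R>"
  shows "emeasure Q (S R) = (if Q = R then 1 else 0)"
proof (cases "Q = R")
  case True
  interpret prob_space Q
    using prob_on_R[OF assms(1)] by (simp add: prob_on_def)
  have "AE x in Q. x \<in> S Q"
    using emeasure_compl_S[OF assms(1)] sets_S[OF assms(1)] sets_R[OF assms(1)]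
      sets_eq_imp_space_eq[OF sets_R[OF assms(1)]]
    by (intro AE_I'[of "space M - S Q"]) auto
  then have "emeasure Q (S Q) = 1"
    using sets_S[OF assms(1)] sets_R[OF assms(1)] by (intro emeasure_eq_1_AE) auto
  then show ?thesis
    using True by simp
next
  case False
  then have "emeasure Q (S Q \<inter> S R) = 0"
    using assms disjoint polar_emeasure_R_eq_0 by (auto simp: qs_disjointly_supported_def)
  moreover have "emeasure Q (S R) \<le> emeasure Q (S Q \<inter> S R) + emeasure Q (space M - S Q)"
    using assms sets_S sets_R sets.sets_into_space[OF sets_S[OF assms(2)]]
    by (intro order_trans[OF emeasure_mono emeasure_subadditive]) auto
  ultimately show ?thesis
    using False emeasure_compl_S[OF assms(1)] by simp
qed

lemma R_abs_cont:
  assumes "sigma_convex M \<P>"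
  shows "abs_cont_family \<R> \<P>"
  unfolding abs_cont_family_def
proof
  fix Q assume Q: "Q \<in> \<R>"
  show "\<exists>P\<in>\<P>. absolutely_continuous P Q"
  proof (rule sigma_convex_dominates_supported[OF sets_P assms prob_on_R[OF Q] supported_with_R[OF Q]])
    fix N assume "N \<in> sets M" "\<forall>P\<in>\<P>. emeasure P N = 0"
    then show "emeasure Q N = 0"
      using alternative Q by (auto simp: supported_alternative_def same_null_sets_def)
  qed
qed

lemma R_of_countable:
  assumes "P \<in> \<P>"
  shows "countable (R_of \<R> S P)"
  using prob_on_P[OF assms] assms disjoint sets_S by (rule countable_R_of)

lemma null_sets_of_R_of_null:
  assumes P: "P \<in> \<P>" and cover: "emeasure P (\<Union>Q\<in>R_of \<R> S P. S Q) = 1"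
    and N: "N \<in> sets M" and null: "\<And>Q. Q \<in> R_of \<R> S P \<Longrightarrow> emeasure Q N = 0"
  shows "N \<in> null_sets P"
proof -
  interpret prob_space P
    using prob_on_P[OF P] by (simp add: prob_on_def)
  let ?C = "R_of \<R> S P"
  let ?U = "\<Union>Q\<in>?C. S Q"
  have C: "Q \<in> \<R>" if "Q \<in> ?C" for Q
    using that by (simp add: R_of_def)
  have U: "?U \<in> sets M"
    using R_of_countable[OF P] sets_S C by (intro sets.countable_UN'') auto
  have "N \<inter> S Q \<in> null_sets P" if Q: "Q \<in> ?C" for Q
  proof -
    have "emeasure Q (N \<inter> S Q) = 0"
      using null[OF Q] N sets_S sets_R C[OF Q] by (auto intro: emeasure_eq_0)
    then have "polar M \<P> (N \<inter> S Q)"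
      using supported_with_R[OF C[OF Q]] N by (auto simp: supported_with_def)
    then show ?thesis
      using N sets_S[OF C[OF Q]] sets_P[OF P] by (intro null_setsI polar_emeasure_eq_0[OF _ P]) auto
  qed
  then have "(\<Union>Q\<in>?C. N \<inter> S Q) \<in> null_sets P"
    using R_of_countable[OF P] by (intro null_sets_UN')
  moreover have "space M - ?U \<in> null_sets P"
  proof (rule null_setsI)
    have "emeasure P (space P - ?U) = emeasure P (space P) - emeasure P ?U"
      using U sets_P[OF P] by (intro emeasure_compl) auto
    then show "emeasure P (space M - ?U) = 0"
      using cover emeasure_space_1 sets_eq_imp_space_eq[OF sets_P[OF P]] by simp
  qed (use U sets_P[OF P] in auto)
  moreover have "N \<subseteq> (\<Union>Q\<in>?C. N \<inter> S Q) \<union> (space M - ?U)"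
    using sets.sets_into_space[OF N] by blast
  ultimately show "N \<in> null_sets P"
    using N sets_P[OF P] by (auto intro: null_sets_subset)
qed

lemma P_abs_cont:
  assumes cover: "\<And>P. P \<in> \<P> \<Longrightarrow> emeasure P (\<Union>Q\<in>R_of \<R> S P. S Q) = 1"
  shows "abs_cont_family \<P> (sconv M \<R>)"
  unfolding abs_cont_family_def
proof
  fix P assume P: "P \<in> \<P>"
  have "R_of \<R> S P \<noteq> {}"
    using cover[OF P] by auto
  then obtain B where B: "B \<in> sconv M \<R>" "null_sets B = (\<Inter>Q\<in>R_of \<R> S P. null_sets Q)"
    by (rule sconv_countable_null_sets[where M = M and \<Q> = \<R>, OF R_of_countable[OF P]])
      (use sets_R in \<open>auto simp: R_of_def\<close>)
  have "null_sets B \<subseteq> null_sets P"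
  proof
    fix N assume "N \<in> null_sets B"
    then have null: "N \<in> null_sets Q" if "Q \<in> R_of \<R> S P" for Q
      using B(2) that by auto
    obtain Q where "Q \<in> R_of \<R> S P"
      using \<open>R_of \<R> S P \<noteq> {}\<close> by blast
    then have "N \<in> sets M"
      using null sets_R by (auto simp: R_of_def null_sets_def)
    moreover have "emeasure Q N = 0" if "Q \<in> R_of \<R> S P" for Q
      using null[OF that] by auto
    ultimately show "N \<in> null_sets P"
      using P cover[OF P] by (intro null_sets_of_R_of_null)
  qed
  with B(1) show "\<exists>B\<in>sconv M \<R>. absolutely_continuous B P"
    unfolding absolutely_continuous_def by blast
qed

lemma pre_Hahn_localizable:
  assumes "sigma_convex M \<P>"
    and "\<And>P. P \<in> \<P> \<Longrightarrow> emeasure P (\<Union>Q\<in>R_of \<R> S P. S Q) = 1"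
  shows "pre_Hahn_localizable M \<P>"
  unfolding pre_Hahn_localizable_def
  using prob_on_R sets_S emeasure_S R_abs_cont[OF assms(1)] P_abs_cont[OF assms(2)]
  by (intro exI[of _ \<R>] exI[of _ S]) blast

end

theorem lemma3p10:
  fixes M :: "'a measure" and \<P> :: "'a measure set"
  assumes "\<forall>P\<in>\<P>. prob_on M P"
    and "sigma_convex M \<P>"
  shows "(class_S M \<P> \<and>
          (\<exists>\<R> S. supported_alternative M \<P> \<R> S \<and> qs_disjointly_supported M \<P> \<R> S \<and>
                 (\<forall>P\<in>\<P>. emeasure P (\<Union>Q\<in>R_of \<R> S P. S Q) = 1)))
         \<longleftrightarrow> pre_Hahn_localizable M \<P>" (is "?S \<and> ?alternative \<longleftrightarrow> _")
proof
  assume "?S \<and> ?alternative"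
  then obtain \<R> S where "supported_alternative M \<P> \<R> S" "qs_disjointly_supported M \<P> \<R> S"
    and cover: "\<forall>P\<in>\<P>. emeasure P (\<Union>Q\<in>R_of \<R> S P. S Q) = 1"
    by blast
  with assms(1) interpret disjointly_supported_alternative M \<P> \<R> S
    by unfold_locales auto
  show "pre_Hahn_localizable M \<P>"
    using assms(2) cover by (intro pre_Hahn_localizable) auto
next
  assume "pre_Hahn_localizable M \<P>"
  then obtain \<Q> S where "pre_Hahn_localization M \<P> \<Q> S"
    using assms(1) unfolding pre_Hahn_localizable_def pre_Hahn_localization_def by metis
  then interpret pre_Hahn_localization M \<P> \<Q> S .
  show "?S \<and> ?alternative"
    using supported_alternative_S qs_disjointly_supported_S emeasure_UN_S_R_of
    unfolding class_S_def by blast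
qed

end
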